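(* Let $F(x)$ be a quantifier-free formula such that $x\in\mathrm{RV}(F(x))$, and let $\mathbf c$ be a nonempty finite set of object constants containing every object constant occurring in $F(x)$. Then the formula $F(x)\rightarrow\mathit{in}_{\mathbf c}(x)$ is derivable from $\mathit{SPP}_{\mathbf c}$ in $\mathbf{INT}^=$.
   Context: Formulas are first-order formulas with object constants, predicate constants and equality, but no function constants of arity $>0$; primitive connectives $\bot,\land,\lor,\rightarrow$. Restricted variables: for quantifier-free $G$, $\mathrm{RV}(G)$ is: $\emptyset$ if $G$ is an equality between two variables; the set of variables of $G$ if $G$ is any other atomic formula; $\mathrm{RV}(\bot)=\emptyset$; $\mathrm{RV}(G\land H)=\mathrm{RV}(G)\cup\mathrm{RV}(H)$; $\mathrm{RV}(G\lor H)=\mathrm{RV}(G)\cap\mathrm{RV}(H)$; $\mathrm{RV}(G\rightarrow H)=\emptyset$. For a finite set $\mathbf c$ of object constants, $\mathit{in}_{\mathbf c}(x_1,\dots,x_m)$ is $\bigwedge_{1\le j\le m}\bigvee_{c\in\mathbf c}x_j=c$, and $\mathit{SPP}_{\mathbf c}$ is the conjunction of the sentences $\forall\mathbf x(p_i(\mathbf x)\rightarrow\mathit{in}_{\mathbf c}(\mathbf x))$ over all predicate constants $p_i$ occurring in $F(x)$ ($\mathbf x$ distinct variables of the arity of $p_i$). $\mathbf{INT}^=$ is intuitionistic predicate logic with equality. *)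

theory Defs
  imports Main
begin

text \<open>Variables are de Bruijn indices (loose indices are the free variables);
  object constants are named by natural numbers.
  A predicate constant is identified by its name together with its arity
  (the length of its argument list).\<close>

datatype tm = Var nat | Const nat

datatype fm =
    FBot
  | Pred nat "tm list"
  | Eq tm tm
  | And fm fm
  | Or fm fm
  | Imp fm fm
  | All fm
  | Ex fm

fun lift_tm :: "tm \<Rightarrow> nat \<Rightarrow> tm" where
  "lift_tm (Var i) k = (if i < k then Var i else Var (Suc i))"
| "lift_tm (Const c) k = Const c"

fun subst_tm :: "tm \<Rightarrow> tm \<Rightarrow> nat \<Rightarrow> tm" where
  "subst_tm (Var i) s k = (if k < i then Var (i - 1) else if i = k then s else Var i)"
| "subst_tm (Const c) s k = Const c"

primrec subst :: "fm \<Rightarrow> tm \<Rightarrow> nat \<Rightarrow> fm" where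
  "subst FBot s k = FBot"
| "subst (Pred p ts) s k = Pred p (map (\<lambda>t. subst_tm t s k) ts)"
| "subst (Eq t u) s k = Eq (subst_tm t s k) (subst_tm u s k)"
| "subst (And a b) s k = And (subst a s k) (subst b s k)"
| "subst (Or a b) s k = Or (subst a s k) (subst b s k)"
| "subst (Imp a b) s k = Imp (subst a s k) (subst b s k)"
| "subst (All a) s k = All (subst a (lift_tm s 0) (Suc k))"
| "subst (Ex a) s k = Ex (subst a (lift_tm s 0) (Suc k))"

fun consts_tm :: "tm \<Rightarrow> nat set" where
  "consts_tm (Var i) = {}"
| "consts_tm (Const c) = {c}"

primrec consts_fm :: "fm \<Rightarrow> nat set" where
  "consts_fm FBot = {}"
| "consts_fm (Pred p ts) = (\<Union>t\<in>set ts. consts_tm t)"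
| "consts_fm (Eq t u) = consts_tm t \<union> consts_tm u"
| "consts_fm (And a b) = consts_fm a \<union> consts_fm b"
| "consts_fm (Or a b) = consts_fm a \<union> consts_fm b"
| "consts_fm (Imp a b) = consts_fm a \<union> consts_fm b"
| "consts_fm (All a) = consts_fm a"
| "consts_fm (Ex a) = consts_fm a"

text \<open>Eigenvariable conditions are realised with fresh object constants.\<close>

inductive deriv :: "fm list \<Rightarrow> fm \<Rightarrow> bool" (infix "\<turnstile>" 50) where
  Assum: "a \<in> set G \<Longrightarrow> G \<turnstile> a"
| BotE: "G \<turnstile> FBot \<Longrightarrow> G \<turnstile> a"
| AndI: "G \<turnstile> a \<Longrightarrow> G \<turnstile> b \<Longrightarrow> G \<turnstile> And a b"
| AndE1: "G \<turnstile> And a b \<Longrightarrow> G \<turnstile> a"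
| AndE2: "G \<turnstile> And a b \<Longrightarrow> G \<turnstile> b"
| OrI1: "G \<turnstile> a \<Longrightarrow> G \<turnstile> Or a b"
| OrI2: "G \<turnstile> b \<Longrightarrow> G \<turnstile> Or a b"
| OrE: "G \<turnstile> Or a b \<Longrightarrow> a # G \<turnstile> c \<Longrightarrow> b # G \<turnstile> c \<Longrightarrow> G \<turnstile> c"
| ImpI: "a # G \<turnstile> b \<Longrightarrow> G \<turnstile> Imp a b"
| ImpE: "G \<turnstile> Imp a b \<Longrightarrow> G \<turnstile> a \<Longrightarrow> G \<turnstile> b"
| AllI: "G \<turnstile> subst a (Const c) 0 \<Longrightarrow> c \<notin> (\<Union>g\<in>set G. consts_fm g) \<union> consts_fm a
         \<Longrightarrow> G \<turnstile> All a"
| AllE: "G \<turnstile> All a \<Longrightarrow> G \<turnstile> subst a t 0"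
| ExI: "G \<turnstile> subst a t 0 \<Longrightarrow> G \<turnstile> Ex a"
| ExE: "G \<turnstile> Ex a \<Longrightarrow> subst a (Const c) 0 # G \<turnstile> b
         \<Longrightarrow> c \<notin> (\<Union>g\<in>set G. consts_fm g) \<union> consts_fm a \<union> consts_fm b
         \<Longrightarrow> G \<turnstile> b"
| Refl: "G \<turnstile> Eq t t"
| EqSubst: "G \<turnstile> Eq s t \<Longrightarrow> G \<turnstile> subst a s 0 \<Longrightarrow> G \<turnstile> subst a t 0"

primrec qfree :: "fm \<Rightarrow> bool" where
  "qfree FBot = True"
| "qfree (Pred p ts) = True"
| "qfree (Eq t u) = True"
| "qfree (And a b) = (qfree a \<and> qfree b)"
| "qfree (Or a b) = (qfree a \<and> qfree b)"
| "qfree (Imp a b) = (qfree a \<and> qfree b)"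
| "qfree (All a) = False"
| "qfree (Ex a) = False"

fun vars_tm :: "tm \<Rightarrow> nat set" where
  "vars_tm (Var i) = {i}"
| "vars_tm (Const c) = {}"

fun RV :: "fm \<Rightarrow> nat set" where
  "RV FBot = {}"
| "RV (Eq (Var i) (Var j)) = {}"
| "RV (Eq t u) = vars_tm t \<union> vars_tm u"
| "RV (Pred p ts) = (\<Union>t\<in>set ts. vars_tm t)"
| "RV (And a b) = RV a \<union> RV b"
| "RV (Or a b) = RV a \<inter> RV b"
| "RV (Imp a b) = {}"
| "RV (All a) = {}"
| "RV (Ex a) = {}"

fun conj :: "fm list \<Rightarrow> fm" where
  "conj [] = Imp FBot FBot"
| "conj [a] = a"
| "conj (a # as) = And a (conj as)"

fun disj :: "fm list \<Rightarrow> fm" where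
  "disj [] = FBot"
| "disj [a] = a"
| "disj (a # as) = Or a (disj as)"

definition in_c :: "nat set \<Rightarrow> tm list \<Rightarrow> fm" where
  "in_c C xs = conj (map (\<lambda>x. disj (map (\<lambda>c. Eq x (Const c)) (sorted_list_of_set C))) xs)"

primrec preds :: "fm \<Rightarrow> (nat \<times> nat) list" where
  "preds FBot = []"
| "preds (Pred p ts) = [(p, length ts)]"
| "preds (Eq t u) = []"
| "preds (And a b) = preds a @ preds b"
| "preds (Or a b) = preds a @ preds b"
| "preds (Imp a b) = preds a @ preds b"
| "preds (All a) = preds a"
| "preds (Ex a) = preds a"

text \<open>\<open>\<forall>x1..xn (p(x1,...,xn) \<rightarrow> in_C(x1,...,xn))\<close>, with xj = de Bruijn index n-j.\<close>

definition spp_ax :: "nat set \<Rightarrow> nat \<times> nat \<Rightarrow> fm" where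
  "spp_ax C pn = (let n = snd pn; xs = map (\<lambda>j. Var (n - Suc j)) [0..<n] in
     (All ^^ n) (Imp (Pred (fst pn) xs) (in_c C xs)))"

definition SPP :: "nat set \<Rightarrow> fm \<Rightarrow> fm" where
  "SPP C F = conj (map (spp_ax C) (remdups (preds F)))"

end

theory Submission
  imports Defs
begin

text \<open>If \<open>x\<close> is restricted in an atom \<open>p(t\<^sub>1,\<dots>,t\<^sub>n)\<close>, then \<open>x\<close> is some \<open>t\<^sub>j\<close>, and
  instantiating the SPP axiom of \<open>p\<close> yields \<open>in\<^sub>C(t\<^sub>1,\<dots>,t\<^sub>n)\<close>, whose \<open>j\<close>-th conjunct
  is \<open>in\<^sub>C(x)\<close>; if it is restricted in an equation, the equation is \<open>x = c\<close> or \<open>c = x\<close>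
  with \<open>c \<in> C\<close>. Restriction in a conjunction comes from one conjunct, and in a
  disjunction from both disjuncts, which gives the cases of \<open>\<or>\<close>-elimination.\<close>

lemma deriv_conj_member: "a \<in> set as \<Longrightarrow> G \<turnstile> conj as \<Longrightarrow> G \<turnstile> a"
proof (induction as rule: conj.induct)
  case (3 a b c)
  then show ?case by (auto intro: AndE1 AndE2)
qed auto

lemma deriv_disj_member: "a \<in> set as \<Longrightarrow> G \<turnstile> a \<Longrightarrow> G \<turnstile> disj as"
proof (induction as rule: disj.induct)
  case (3 a b c)
  then show ?case by (auto intro: OrI1 OrI2)
qed auto

lemma subst_tm_lift_tm: "subst_tm (lift_tm s 0) t 0 = s"
  by (cases s) auto

lemma deriv_Eq_sym:
  assumes "G \<turnstile> Eq s t"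
  shows "G \<turnstile> Eq t s"
proof -
  have "G \<turnstile> subst (Eq (Var 0) (lift_tm s 0)) s 0"
    by (simp add: subst_tm_lift_tm Refl)
  with assms have "G \<turnstile> subst (Eq (Var 0) (lift_tm s 0)) t 0"
    by (rule EqSubst)
  then show ?thesis by (simp add: subst_tm_lift_tm)
qed

lemma in_c_single: "in_c C [t] = disj (map (\<lambda>c. Eq t (Const c)) (sorted_list_of_set C))"
  by (simp add: in_c_def)

lemma deriv_in_c_single:
  assumes "finite C" "c \<in> C" "G \<turnstile> Eq t (Const c)"
  shows "G \<turnstile> in_c C [t]"
  unfolding in_c_single using assms by (intro deriv_disj_member[of "Eq t (Const c)"]) auto

lemma deriv_in_c_member:
  assumes "G \<turnstile> in_c C ts" "t \<in> set ts"
  shows "G \<turnstile> in_c C [t]"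
proof -
  have "G \<turnstile> conj (map (\<lambda>x. disj (map (\<lambda>c. Eq x (Const c)) (sorted_list_of_set C))) ts)"
    using assms(1) unfolding in_c_def .
  then show ?thesis
    unfolding in_c_single by (rule deriv_conj_member[rotated]) (use assms(2) in simp)
qed

text \<open>\<open>map_tms\<close> leaves quantified subformulas untouched, so it is only meaningful on
  quantifier-free formulas.\<close>

primrec map_tms :: "(tm \<Rightarrow> tm) \<Rightarrow> fm \<Rightarrow> fm" where
  "map_tms f FBot = FBot"
| "map_tms f (Pred p ts) = Pred p (map f ts)"
| "map_tms f (Eq t u) = Eq (f t) (f u)"
| "map_tms f (And a b) = And (map_tms f a) (map_tms f b)"
| "map_tms f (Or a b) = Or (map_tms f a) (map_tms f b)"
| "map_tms f (Imp a b) = Imp (map_tms f a) (map_tms f b)"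
| "map_tms f (All a) = All a"
| "map_tms f (Ex a) = Ex a"

lemma map_tms_ident: "map_tms (\<lambda>u. u) b = b"
  by (induction b) auto

lemma map_tms_map_tms: "map_tms f (map_tms g b) = map_tms (f \<circ> g) b"
  by (induction b) auto

lemma qfree_map_tms [simp]: "qfree (map_tms f b) = qfree b"
  by (induction b) auto

lemma subst_eq_map_tms: "qfree b \<Longrightarrow> subst b s k = map_tms (\<lambda>u. subst_tm u s k) b"
  by (induction b) auto

lemma map_tms_conj: "map_tms f (conj as) = conj (map (map_tms f) as)"
  by (induction as rule: conj.induct) auto

lemma map_tms_disj: "map_tms f (disj as) = disj (map (map_tms f) as)"
  by (induction as rule: disj.induct) auto

lemma map_tms_in_c: "(\<And>c. f (Const c) = Const c) \<Longrightarrow> map_tms f (in_c C ts) = in_c C (map f ts)"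
  unfolding in_c_def by (simp add: map_tms_conj map_tms_disj o_def)

lemma qfree_conj: "(\<And>a. a \<in> set as \<Longrightarrow> qfree a) \<Longrightarrow> qfree (conj as)"
  by (induction as rule: conj.induct) auto

lemma qfree_disj: "(\<And>a. a \<in> set as \<Longrightarrow> qfree a) \<Longrightarrow> qfree (disj as)"
  by (induction as rule: disj.induct) auto

lemma qfree_in_c: "qfree (in_c C ts)"
  unfolding in_c_def by (auto intro!: qfree_conj qfree_disj)

fun shift_tm :: "nat \<Rightarrow> tm \<Rightarrow> tm" where
  "shift_tm k (Var i) = Var (i + k)"
| "shift_tm k (Const c) = Const c"

lemma shift_tm_0 [simp]: "shift_tm 0 t = t"
  by (cases t) auto

lemma subst_All_funpow:
  "subst ((All ^^ m) b) t k = (All ^^ m) (subst b (shift_tm m t) (k + m))"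
proof (induction m arbitrary: t k)
  case (Suc m)
  have "shift_tm m (lift_tm t 0) = shift_tm (Suc m) t" by (cases t) auto
  with Suc show ?case by simp
qed simp

text \<open>In \<open>(All ^^ length ts) b\<close> the index \<open>0\<close> is bound by the innermost quantifier, while
  \<open>ts\<close> lists the instances from the outermost quantifier inwards; hence the \<open>rev\<close>.\<close>

fun inst_tm :: "tm list \<Rightarrow> tm \<Rightarrow> tm" where
  "inst_tm ts (Var i) = (if i < length ts then rev ts ! i else Var (i - length ts))"
| "inst_tm ts (Const c) = Const c"

lemma inst_tm_Nil: "inst_tm [] = (\<lambda>u. u)"
proof
  fix u show "inst_tm [] u = u" by (cases u) auto
qed

lemma inst_tm_Cons:
  "inst_tm (t # ts) = inst_tm ts \<circ> (\<lambda>u. subst_tm u (shift_tm (length ts) t) (length ts))"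
proof
  fix u
  show "inst_tm (t # ts) u = (inst_tm ts \<circ> (\<lambda>u. subst_tm u (shift_tm (length ts) t) (length ts))) u"
    by (cases u; cases t) (auto simp: nth_append)
qed

lemma deriv_All_funpow_inst:
  "G \<turnstile> (All ^^ length ts) b \<Longrightarrow> qfree b \<Longrightarrow> G \<turnstile> map_tms (inst_tm ts) b"
proof (induction ts arbitrary: b)
  case Nil
  then show ?case by (simp add: inst_tm_Nil map_tms_ident)
next
  case (Cons t ts)
  let ?n = "length ts"
  have "G \<turnstile> All ((All ^^ ?n) b)" using Cons.prems(1) by simp
  then have "G \<turnstile> subst ((All ^^ ?n) b) t 0" by (rule AllE)
  then have "G \<turnstile> (All ^^ ?n) (map_tms (\<lambda>u. subst_tm u (shift_tm ?n t) ?n) b)"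
    using Cons.prems(2) by (simp add: subst_All_funpow subst_eq_map_tms)
  then have "G \<turnstile> map_tms (inst_tm ts) (map_tms (\<lambda>u. subst_tm u (shift_tm ?n t) ?n) b)"
    using Cons.prems(2) by (rule Cons.IH[OF _ qfree_map_tms[THEN iffD2]])
  then show ?case by (simp only: map_tms_map_tms inst_tm_Cons)
qed

lemma deriv_in_c_of_Pred:
  assumes "G \<turnstile> spp_ax C (p, length ts)" "G \<turnstile> Pred p ts"
  shows "G \<turnstile> in_c C ts"
proof -
  define xs where "xs = map (\<lambda>j. Var (length ts - Suc j)) [0..<length ts]"
  have "G \<turnstile> (All ^^ length ts) (Imp (Pred p xs) (in_c C xs))"
    using assms(1) by (simp add: spp_ax_def xs_def Let_def)
  then have "G \<turnstile> map_tms (inst_tm ts) (Imp (Pred p xs) (in_c C xs))"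
    by (rule deriv_All_funpow_inst) (simp add: qfree_in_c)
  moreover have "map (inst_tm ts) xs = ts"
    by (rule nth_equalityI) (auto simp: xs_def rev_nth)
  ultimately have "G \<turnstile> Imp (Pred p ts) (in_c C ts)"
    by (simp add: map_tms_in_c)
  then show ?thesis using assms(2) by (rule ImpE)
qed

lemma deriv_in_c_of_RV:
  assumes "qfree H" "x \<in> RV H" "consts_fm H \<subseteq> C" "set (preds H) \<subseteq> set (preds F)"
    and "G \<turnstile> H" "SPP C F \<in> set G" "finite C"
  shows "G \<turnstile> in_c C [Var x]"
  using assms
proof (induction H arbitrary: G)
  case (Pred p ts)
  have "G \<turnstile> conj (map (spp_ax C) (remdups (preds F)))"
    using Pred.prems(6) unfolding SPP_def by (rule Assum)
  then have "G \<turnstile> spp_ax C (p, length ts)"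
    by (rule deriv_conj_member[rotated]) (use Pred.prems(4) in simp)
  then have "G \<turnstile> in_c C ts" using Pred.prems(5) by (rule deriv_in_c_of_Pred)
  moreover obtain t where t: "t \<in> set ts" "x \<in> vars_tm t" using Pred.prems(2) by auto
  have "t = Var x" using t(2) by (cases t) auto
  with t(1) have "Var x \<in> set ts" by simp
  ultimately show ?case by (rule deriv_in_c_member)
next
  case (Eq t u)
  then consider c where "t = Var x" "u = Const c" "c \<in> C" | c where "t = Const c" "u = Var x" "c \<in> C"
    by (cases t; cases u) auto
  then show ?case
  proof cases
    case 1
    then show ?thesis using Eq.prems(5,7) by (auto intro: deriv_in_c_single)
  next
    case 2
    then show ?thesis using deriv_Eq_sym[OF Eq.prems(5)] Eq.prems(7) by (auto intro: deriv_in_c_single)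
  qed
next
  case (And a b)
  then show ?case by (cases "x \<in> RV a") (auto intro: AndE1 AndE2)
next
  case (Or a b)
  have "a # G \<turnstile> in_c C [Var x]"
    using Or.prems by (intro Or.IH(1)) (auto intro: Assum)
  moreover have "b # G \<turnstile> in_c C [Var x]"
    using Or.prems by (intro Or.IH(2)) (auto intro: Assum)
  ultimately show ?case using Or.prems(5) by (auto intro: OrE)
qed auto

theorem lemma6:
  fixes F :: fm and x :: nat and C :: "nat set"
  assumes "qfree F"
    and "x \<in> RV F"
    and "finite C" and "C \<noteq> {}"
    and "consts_fm F \<subseteq> C"
  shows "[SPP C F] \<turnstile> Imp F (in_c C [Var x])"
proof (rule ImpI)
  have "[F, SPP C F] \<turnstile> F" by (rule Assum) simp
  with assms show "[F, SPP C F] \<turnstile> in_c C [Var x]"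
    by (intro deriv_in_c_of_RV[where F = F]) auto
qed

end
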